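(* Let $(G,c)$ be a W-state graph, let $X,X'$ be the vertex sets of the two connected components of $G_m=(V(G),E_m(G))$, and let $\{x,x'\}$ be a two-vertex cut of $G$ with $x\in X$ and $x'\in X'$. Let $C_1,\dots,C_t$ be the connected components of $G-\{x,x'\}$. Then each W-block $(H_i,c_i)$, $i\in\{1,\dots,t\}$, of $(G,c)$ with respect to $\{x,x'\}$ is a W-state graph.
   Context: Graphs may have parallel edges but no loops. A half-edge $2$-colouring $c$ of $G$ assigns to each pair $(e,w)$ with $w$ an endpoint of edge $e$ a colour in $\{0,1\}$ (0 = blue, 1 = red). An edge $e=uv$ is bichromatic if $c(e,u)\neq c(e,v)$ and monochromatic otherwise; $E_m(G)$ is the set of monochromatic edges; standing convention: monochromatic edges are blue at both ends. A graph is matching-covered if every edge lies in some perfect matching. A W-state graph is a half-edge $2$-coloured matching-covered graph $(G,c)$ in which every perfect matching contains exactly one bichromatic edge, and every vertex $v$ is incident with an edge $e$ with $c(e,v)=1$. For any W-state graph, $G_m$ has exactly two connected components. W-blocks: for each $i$, start from $H_i:=G[V(C_i)\cup\{x,x'\}]$ (induced subgraph, keeping all parallel edges) with colouring $c_i$ agreeing with $c$ on its edges, and modify as follows. (1) If $x$ is not incident in $H_i$ with an edge whose half at $x$ is red, add a new bichromatic edge between $x$ and $x'$ whose red half is at $x$; likewise, if $x'$ is not incident in $H_i$ with an edge whose half at $x'$ is red, add a new bichromatic edge between $x$ and $x'$ whose red half is at $x'$. (2) If after this $H_i$ still contains no bichromatic edge between $x$ and $x'$, add a new bichromatic edge between $x$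 and $x'$ (with the red half at either endpoint). The resulting $(H_i,c_i)$ are the W-blocks. *)

theory Defs
  imports Main
begin

text \<open>A finite multigraph (parallel edges allowed, no loops): vertex set V, edge set E of
  edge identifiers, and ends e = the two-element set of endpoints of edge e.
  A half-edge 2-colouring is c :: 'e => 'v => bool, where c e w is the colour of the half of e
  at its endpoint w; True = 1 = red, False = 0 = blue.\<close>

definition multigraph :: "'v set \<Rightarrow> 'e set \<Rightarrow> ('e \<Rightarrow> 'v set) \<Rightarrow> bool" where
  "multigraph V E ends \<longleftrightarrow> finite V \<and> finite E \<and>
     (\<forall>e\<in>E. ends e \<subseteq> V \<and> card (ends e) = 2)"

definition bichromatic :: "('e \<Rightarrow> 'v set) \<Rightarrow> ('e \<Rightarrow> 'v \<Rightarrow> bool) \<Rightarrow> 'e \<Rightarrow> bool" where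
  "bichromatic ends c e \<longleftrightarrow> (\<exists>u v. ends e = {u, v} \<and> c e u \<noteq> c e v)"

definition perfect_matching :: "'v set \<Rightarrow> 'e set \<Rightarrow> ('e \<Rightarrow> 'v set) \<Rightarrow> 'e set \<Rightarrow> bool" where
  "perfect_matching V E ends M \<longleftrightarrow> M \<subseteq> E \<and> (\<forall>v\<in>V. \<exists>!e. e \<in> M \<and> v \<in> ends e)"

definition matching_covered :: "'v set \<Rightarrow> 'e set \<Rightarrow> ('e \<Rightarrow> 'v set) \<Rightarrow> bool" where
  "matching_covered V E ends \<longleftrightarrow> multigraph V E ends \<and>
     (\<forall>e\<in>E. \<exists>M. perfect_matching V E ends M \<and> e \<in> M)"

text \<open>W-state graph. The standing convention (monochromatic edges are blue at both ends)
  is included as part of the notion of a half-edge 2-coloured graph.\<close>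
definition W_state :: "'v set \<Rightarrow> 'e set \<Rightarrow> ('e \<Rightarrow> 'v set) \<Rightarrow> ('e \<Rightarrow> 'v \<Rightarrow> bool) \<Rightarrow> bool" where
  "W_state V E ends c \<longleftrightarrow>
     matching_covered V E ends \<and>
     (\<forall>e\<in>E. \<not> bichromatic ends c e \<longrightarrow> (\<forall>w\<in>ends e. \<not> c e w)) \<and>
     (\<forall>M. perfect_matching V E ends M \<longrightarrow> card {e \<in> M. bichromatic ends c e} = 1) \<and>
     (\<forall>v\<in>V. \<exists>e\<in>E. v \<in> ends e \<and> c e v)"

definition reach :: "'v set \<Rightarrow> 'e set \<Rightarrow> ('e \<Rightarrow> 'v set) \<Rightarrow> 'v \<Rightarrow> 'v \<Rightarrow> bool" where
  "reach W F ends = (\<lambda>u v. u \<in> W \<and> v \<in> W \<and> (\<exists>e\<in>F. ends e = {u, v}))\<^sup>*\<^sup>*"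

definition component :: "'v set \<Rightarrow> 'e set \<Rightarrow> ('e \<Rightarrow> 'v set) \<Rightarrow> 'v set \<Rightarrow> bool" where
  "component W F ends K \<longleftrightarrow> (\<exists>u\<in>W. K = {v \<in> W. reach W F ends u v})"

definition mono_edges :: "'e set \<Rightarrow> ('e \<Rightarrow> 'v set) \<Rightarrow> ('e \<Rightarrow> 'v \<Rightarrow> bool) \<Rightarrow> 'e set" where
  "mono_edges E ends c = {e \<in> E. \<not> bichromatic ends c e}"

definition del_verts_E :: "'e set \<Rightarrow> ('e \<Rightarrow> 'v set) \<Rightarrow> 'v set \<Rightarrow> 'e set" where
  "del_verts_E E ends S = {e \<in> E. ends e \<inter> S = {}}"

definition two_vertex_cut :: "'v set \<Rightarrow> 'e set \<Rightarrow> ('e \<Rightarrow> 'v set) \<Rightarrow> 'v \<Rightarrow> 'v \<Rightarrow> bool" where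
  "two_vertex_cut V E ends x x' \<longleftrightarrow> x \<in> V \<and> x' \<in> V \<and> x \<noteq> x' \<and>
     (\<exists>u\<in>V - {x, x'}. \<exists>w\<in>V - {x, x'}.
        \<not> reach (V - {x, x'}) (del_verts_E E ends {x, x'}) ends u w)"

text \<open>Edges of the block have type 'e + nat: Inl e are the edges of the induced subgraph,
  Inr 0, Inr 1, Inr 2 are the possibly added new x x' edges of steps (1) and (2).
  The flag r selects the endpoint of the red half of the edge added in step (2):
  r = True means red at x, r = False means red at x'.\<close>

definition wblock_V :: "'v set \<Rightarrow> 'v \<Rightarrow> 'v \<Rightarrow> 'v set" where
  "wblock_V C x x' = C \<union> {x, x'}"

definition wblock_ends :: "('e \<Rightarrow> 'v set) \<Rightarrow> 'v \<Rightarrow> 'v \<Rightarrow> 'e + nat \<Rightarrow> 'v set" where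
  "wblock_ends ends x x' f = (case f of Inl e \<Rightarrow> ends e | Inr _ \<Rightarrow> {x, x'})"

definition wblock_col :: "('e \<Rightarrow> 'v \<Rightarrow> bool) \<Rightarrow> 'v \<Rightarrow> 'v \<Rightarrow> bool \<Rightarrow> 'e + nat \<Rightarrow> 'v \<Rightarrow> bool" where
  "wblock_col c x x' r f w = (case f of
      Inl e \<Rightarrow> c e w
    | Inr n \<Rightarrow> (if n = 0 then w = x else if n = 1 then w = x'
               else (if r then w = x else w = x')))"

definition wblock_E0 :: "'e set \<Rightarrow> ('e \<Rightarrow> 'v set) \<Rightarrow> 'v set \<Rightarrow> 'v \<Rightarrow> 'v \<Rightarrow> ('e + nat) set" where
  "wblock_E0 E ends C x x' = Inl ` {e \<in> E. ends e \<subseteq> wblock_V C x x'}"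

definition wblock_E1 :: "'e set \<Rightarrow> ('e \<Rightarrow> 'v set) \<Rightarrow> ('e \<Rightarrow> 'v \<Rightarrow> bool) \<Rightarrow> 'v set \<Rightarrow> 'v \<Rightarrow> 'v
    \<Rightarrow> ('e + nat) set" where
  "wblock_E1 E ends c C x x' =
     (let E0 = wblock_E0 E ends C x x';
          ends' = wblock_ends ends x x'; c' = wblock_col c x x' True;
          redx = (\<exists>f\<in>E0. x \<in> ends' f \<and> c' f x);
          redx' = (\<exists>f\<in>E0. x' \<in> ends' f \<and> c' f x')
      in E0 \<union> (if redx then {} else {Inr 0}) \<union> (if redx' then {} else {Inr 1}))"

definition wblock_E :: "'e set \<Rightarrow> ('e \<Rightarrow> 'v set) \<Rightarrow> ('e \<Rightarrow> 'v \<Rightarrow> bool) \<Rightarrow> 'v set \<Rightarrow> 'v \<Rightarrow> 'v \<Rightarrow> bool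
    \<Rightarrow> ('e + nat) set" where
  "wblock_E E ends c C x x' r =
     (let E1 = wblock_E1 E ends c C x x';
          ends' = wblock_ends ends x x'; c' = wblock_col c x x' r
      in E1 \<union> (if (\<exists>f\<in>E1. ends' f = {x, x'} \<and> bichromatic ends' c' f) then {} else {Inr 2}))"

end

theory Submission
  imports Defs
begin

(* Let X be the monochromatic component containing x. Monochromatic edges never leave X, so
   for a perfect matching with bichromatic edge b, |X| and |X \<inter> b| have the same parity.
   If |X| were even, no edge would cross X, and perfect matchings through the red half-edges at
   a vertex inside and at a vertex outside X would glue to one with two bichromatic edges. So
   |X| is odd, every bichromatic edge has exactly one end in X, and any matching P covering a
   vertex set U satisfies |X \<inter> U| + #(bichromatic edges of P) = 0 mod 2.

   Applied to the edges of a perfect matching of G that meet C (using the red half-edges at x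
   and x'), this shows that |X \<inter> C| and |C| are even and that these edges cover exactly C or
   exactly C \<union> {x, x'}; the first case occurs for a perfect matching through the red
   half-edge at a vertex beyond the cut. A perfect matching of a W-block is a perfect matching
   of C plus an x x'-edge, or a perfect matching of C \<union> {x, x'} by edges of G. Exchanging it
   into a perfect matching of G of the corresponding kind leaves at most one bichromatic edge,
   and parity then gives exactly none inside C, respectively exactly one; x x'-edges are
   bichromatic as x \<in> X and x' \<notin> X. *)

section \<open>Perfect matchings of vertex sets\<close>

definition perfect_matching_on :: "'v set \<Rightarrow> ('e \<Rightarrow> 'v set) \<Rightarrow> 'e set \<Rightarrow> bool" where
  "perfect_matching_on W ends M \<longleftrightarrow>
     (\<forall>e\<in>M. ends e \<subseteq> W) \<and> (\<forall>v\<in>W. \<exists>!e. e \<in> M \<and> v \<in> ends e)"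

lemma perfect_matching_on_alt:
  "perfect_matching_on W ends M \<longleftrightarrow>
     (\<forall>e\<in>M. ends e \<subseteq> W) \<and> (\<forall>v\<in>W. \<exists>e\<in>M. v \<in> ends e) \<and>
     (\<forall>e\<in>M. \<forall>e'\<in>M. \<forall>v. v \<in> ends e \<longrightarrow> v \<in> ends e' \<longrightarrow> e = e')"
  unfolding perfect_matching_on_def by blast

lemma perfect_matching_onI:
  assumes "\<And>e. e \<in> M \<Longrightarrow> ends e \<subseteq> W"
    and "\<And>v. v \<in> W \<Longrightarrow> \<exists>e\<in>M. v \<in> ends e"
    and "\<And>e e' v. e \<in> M \<Longrightarrow> e' \<in> M \<Longrightarrow> v \<in> ends e \<Longrightarrow> v \<in> ends e' \<Longrightarrow> e = e'"
  shows "perfect_matching_on W ends M"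
  unfolding perfect_matching_on_alt using assms by blast

lemma perfect_matching_on_ends_subset:
  "perfect_matching_on W ends M \<Longrightarrow> e \<in> M \<Longrightarrow> ends e \<subseteq> W"
  unfolding perfect_matching_on_alt by blast

lemma perfect_matching_on_covers:
  "perfect_matching_on W ends M \<Longrightarrow> v \<in> W \<Longrightarrow> \<exists>e\<in>M. v \<in> ends e"
  unfolding perfect_matching_on_alt by blast

lemma perfect_matching_on_unique:
  "perfect_matching_on W ends M \<Longrightarrow> e \<in> M \<Longrightarrow> e' \<in> M \<Longrightarrow> v \<in> ends e \<Longrightarrow> v \<in> ends e'
    \<Longrightarrow> e = e'"
  unfolding perfect_matching_on_alt by blast

lemma perfect_matching_on_Union:
  "perfect_matching_on W ends M \<Longrightarrow> \<Union>(ends ` M) = W"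
  unfolding perfect_matching_on_alt by blast

lemma perfect_matching_on_singleton: "perfect_matching_on (ends e) ends {e}"
  by (rule perfect_matching_onI) auto

lemma perfect_matching_on_Un:
  assumes "perfect_matching_on W ends M" "perfect_matching_on W' ends M'" "W \<inter> W' = {}"
  shows "perfect_matching_on (W \<union> W') ends (M \<union> M')"
proof (rule perfect_matching_onI)
  fix e e' v assume "e \<in> M \<union> M'" "e' \<in> M \<union> M'" "v \<in> ends e" "v \<in> ends e'"
  moreover have "v \<notin> W \<inter> W'" using assms(3) by blast
  ultimately show "e = e'"
    using assms(1,2) perfect_matching_on_unique perfect_matching_on_ends_subset
    by (metis Int_iff Un_iff subsetD)
qed (use assms perfect_matching_on_ends_subset perfect_matching_on_covers in fastforce)+

lemma perfect_matching_on_subset: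
  "perfect_matching_on W ends M \<Longrightarrow> M' \<subseteq> M \<Longrightarrow> perfect_matching_on (\<Union>(ends ` M')) ends M'"
  unfolding perfect_matching_on_alt by (simp add: subset_iff) blast

lemma perfect_matching_on_Diff:
  "perfect_matching_on W ends M \<Longrightarrow> M' \<subseteq> M
    \<Longrightarrow> perfect_matching_on (W - \<Union>(ends ` M')) ends (M - M')"
  unfolding perfect_matching_on_alt by (simp add: subset_iff) blast

lemma perfect_matching_on_restrict:
  assumes "perfect_matching_on W ends M" "A \<subseteq> W"
    and "\<And>e. e \<in> M \<Longrightarrow> A \<inter> ends e \<noteq> {} \<Longrightarrow> ends e \<subseteq> A"
  shows "perfect_matching_on A ends {e\<in>M. A \<inter> ends e \<noteq> {}}"
  using assms unfolding perfect_matching_on_alt by (simp add: subset_iff) blast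

lemma perfect_matching_on_image:
  "inj g \<Longrightarrow> perfect_matching_on W ends (g ` Q) \<longleftrightarrow> perfect_matching_on W (ends \<circ> g) Q"
  unfolding perfect_matching_on_alt by (simp add: inj_eq)

lemma card_Int_perfect_matching_on:
  assumes "perfect_matching_on W ends M" "finite M" "\<And>e. e \<in> M \<Longrightarrow> finite (ends e)"
  shows "card (A \<inter> W) = (\<Sum>e\<in>M. card (A \<inter> ends e))"
proof -
  have "A \<inter> W = (\<Union>e\<in>M. A \<inter> ends e)"
    using perfect_matching_on_Union[OF assms(1)] by blast
  also have "card \<dots> = (\<Sum>e\<in>M. card (A \<inter> ends e))"
    using assms perfect_matching_on_unique[OF assms(1)] by (intro card_UN_disjoint) blast+
  finally show ?thesis .
qed

lemma perfect_matching_iff_on: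
  "multigraph V E ends \<Longrightarrow>
     perfect_matching V E ends M \<longleftrightarrow> M \<subseteq> E \<and> perfect_matching_on V ends M"
  unfolding perfect_matching_def perfect_matching_on_def multigraph_def by blast

section \<open>Connected components\<close>

lemma reach_sym: "reach W F ends u v \<Longrightarrow> reach W F ends v u"
  unfolding reach_def
proof (induction rule: rtranclp_induct)
  case (step y z)
  then have "(\<lambda>u v. u \<in> W \<and> v \<in> W \<and> (\<exists>e\<in>F. ends e = {u, v})) z y"
    by (metis insert_commute)
  then show ?case using step.IH by (rule converse_rtranclp_into_rtranclp)
qed simp

lemma reach_trans: "reach W F ends u v \<Longrightarrow> reach W F ends v w \<Longrightarrow> reach W F ends u w"
  unfolding reach_def by (rule rtranclp_trans)

lemma component_subset: "component W F ends K \<Longrightarrow> K \<subseteq> W"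
  unfolding component_def by blast

lemma component_eq:
  assumes "component W F ends K" "v \<in> K"
  shows "K = {w\<in>W. reach W F ends v w}"
proof -
  obtain u where K: "K = {w\<in>W. reach W F ends u w}"
    using assms(1) unfolding component_def by blast
  then have uv: "reach W F ends u v" using assms(2) by blast
  have vu: "reach W F ends v u" using reach_sym[OF uv] .
  show ?thesis
    unfolding K using reach_trans[OF uv] reach_trans[OF vu] by auto
qed

lemma component_reach:
  assumes "component W F ends K" "u \<in> K" "v \<in> K"
  shows "reach W F ends u v"
  using component_eq[OF assms(1,2)] assms(3) by blast

lemma component_closed:
  assumes "component W F ends K" "u \<in> K" "e \<in> F" "ends e = {u, v}" "v \<in> W"
  shows "v \<in> K"
proof -
  have "u \<in> W" using component_subset[OF assms(1)] assms(2) by blast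
  then have "reach W F ends u v"
    unfolding reach_def using assms(3-5) by (intro r_into_rtranclp) blast
  then show ?thesis using component_eq[OF assms(1,2)] assms(5) by blast
qed

lemma components_disjoint:
  assumes K: "component W F ends K" and K': "component W F ends K'" and "K \<noteq> K'"
  shows "K \<inter> K' = {}"
proof (rule ccontr)
  assume "K \<inter> K' \<noteq> {}"
  then obtain v where "v \<in> K" "v \<in> K'" by blast
  then have "K = K'" using component_eq[OF K \<open>v \<in> K\<close>] component_eq[OF K' \<open>v \<in> K'\<close>] by simp
  then show False using \<open>K \<noteq> K'\<close> by contradiction
qed

lemma component_nonempty: "component W F ends K \<Longrightarrow> K \<noteq> {}"
  unfolding component_def reach_def by blast

section \<open>W-state graphs and the parity of a monochromatic component\<close>

locale W_state_graph =
  fixes V :: "'v set" and E :: "'e set" and ends :: "'e \<Rightarrow> 'v set"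
    and c :: "'e \<Rightarrow> 'v \<Rightarrow> bool"
  assumes W_state: "W_state V E ends c"
begin

abbreviation bic :: "'e \<Rightarrow> bool" where "bic \<equiv> bichromatic ends c"
abbreviation PM :: "'e set \<Rightarrow> bool" where "PM \<equiv> perfect_matching V E ends"

lemma multigraph: "multigraph V E ends"
  using W_state unfolding W_state_def matching_covered_def by blast

lemma finite_V: "finite V" and finite_E: "finite E"
  and ends_subset: "e \<in> E \<Longrightarrow> ends e \<subseteq> V"
  and card_ends: "e \<in> E \<Longrightarrow> card (ends e) = 2"
  using multigraph unfolding multigraph_def by auto

lemma finite_ends: "e \<in> E \<Longrightarrow> finite (ends e)"
  using card_ends card.infinite by fastforce

lemma ends_other:
  assumes "e \<in> E" "u \<in> ends e"
  obtains v where "ends e = {u, v}"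
proof -
  obtain a b where ab: "ends e = {a, b}"
    using card_ends[OF assms(1)] unfolding card_2_iff by blast
  then consider "u = a" | "u = b" using assms(2) by blast
  then show ?thesis
  proof cases
    case 1
    then show ?thesis using that ab by simp
  next
    case 2
    then show ?thesis using that[of a] ab by (simp add: insert_commute)
  qed
qed

lemma even_card_Int_ends_iff:
  assumes "e \<in> E"
  shows "even (card (A \<inter> ends e)) \<longleftrightarrow> ends e \<subseteq> A \<or> A \<inter> ends e = {}"
proof -
  have fin: "finite (ends e)" and two: "card (ends e) = 2"
    using finite_ends card_ends assms by auto
  have le: "card (A \<inter> ends e) \<le> 2"
    using card_mono[OF fin, of "A \<inter> ends e"] two by simp
  have "ends e \<subseteq> A \<longleftrightarrow> A \<inter> ends e = ends e" by blast
  also have "\<dots> \<longleftrightarrow> card (A \<inter> ends e) = 2"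
    using card_subset_eq[OF fin, of "A \<inter> ends e"] two by auto
  finally have "card (A \<inter> ends e) = 2 \<longleftrightarrow> ends e \<subseteq> A" by blast
  moreover have "card (A \<inter> ends e) = 0 \<longleftrightarrow> A \<inter> ends e = {}"
    using fin by simp
  moreover have "even (card (A \<inter> ends e)) \<longleftrightarrow> card (A \<inter> ends e) = 0 \<or> card (A \<inter> ends e) = 2"
    using le by (auto simp: le_Suc_eq numeral_2_eq_2)
  ultimately show ?thesis by argo
qed

lemma PM_iff: "PM M \<longleftrightarrow> M \<subseteq> E \<and> perfect_matching_on V ends M"
  using perfect_matching_iff_on[OF multigraph] .

lemma PM_subset_E: "PM M \<Longrightarrow> M \<subseteq> E"
  and PM_perfect_matching_on: "PM M \<Longrightarrow> perfect_matching_on V ends M"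
  using PM_iff by auto

lemma finite_PM: "PM M \<Longrightarrow> finite M"
  using PM_subset_E finite_E finite_subset by blast

lemma card_bichromatic_PM: "PM M \<Longrightarrow> card {e\<in>M. bic e} = 1"
  using W_state unfolding W_state_def by blast

lemma bichromatic_PM_unique:
  assumes "PM M" "f \<in> M" "bic f"
  shows "{e\<in>M. bic e} = {f}"
proof -
  obtain g where g: "{e\<in>M. bic e} = {g}"
    using card_bichromatic_PM[OF assms(1)] card_1_singletonE by blast
  have "f \<in> {e\<in>M. bic e}" using assms(2,3) by simp
  then show ?thesis unfolding g by simp
qed

lemma matching_covered: "e \<in> E \<Longrightarrow> \<exists>M. PM M \<and> e \<in> M"
  using W_state unfolding W_state_def matching_covered_def by blast

lemma monochromatic_blue: "e \<in> E \<Longrightarrow> \<not> bic e \<Longrightarrow> w \<in> ends e \<Longrightarrow> \<not> c e w"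
  using W_state unfolding W_state_def by blast

lemma red_half_edge: "v \<in> V \<Longrightarrow> \<exists>e\<in>E. v \<in> ends e \<and> c e v"
  using W_state unfolding W_state_def by blast

lemma red_bichromatic: "e \<in> E \<Longrightarrow> v \<in> ends e \<Longrightarrow> c e v \<Longrightarrow> bic e"
  using monochromatic_blue by blast

lemma PM_exchange:
  assumes "PM M" "M' \<subseteq> M" "Q \<subseteq> E" "perfect_matching_on (\<Union>(ends ` M')) ends Q"
  shows "PM (M - M' \<union> Q)"
proof -
  note M = PM_subset_E[OF assms(1)] PM_perfect_matching_on[OF assms(1)]
  have "perfect_matching_on (V - \<Union>(ends ` M') \<union> \<Union>(ends ` M')) ends (M - M' \<union> Q)"
    by (rule perfect_matching_on_Un[OF perfect_matching_on_Diff[OF M(2) assms(2)] assms(4)]) blast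
  moreover have "V - \<Union>(ends ` M') \<union> \<Union>(ends ` M') = V"
    using perfect_matching_on_ends_subset[OF M(2)] assms(2) by blast
  ultimately show ?thesis using PM_iff M(1) assms(3) by auto
qed

lemma card_bichromatic_exchange_le_1:
  assumes "PM M" "M' \<subseteq> M" "Q \<subseteq> E" "perfect_matching_on (\<Union>(ends ` M')) ends Q"
  shows "card {e\<in>Q. bic e} \<le> 1"
proof -
  define P where "P = M - M' \<union> Q"
  have "PM P" unfolding P_def by (rule PM_exchange[OF assms])
  then have "card {e\<in>P. bic e} = 1" by (rule card_bichromatic_PM)
  moreover have "finite {e\<in>P. bic e}" using finite_PM[OF \<open>PM P\<close>] by simp
  moreover have "{e\<in>Q. bic e} \<subseteq> {e\<in>P. bic e}" unfolding P_def by blast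
  ultimately show ?thesis by (metis card_mono)
qed

end

locale W_state_mono_component = W_state_graph V E ends c
  for V :: "'v set" and E :: "'e set" and ends c +
  fixes X :: "'v set"
  assumes component_X: "component V (mono_edges E ends c) ends X"
    and X_neq_V: "X \<noteq> V"
begin

lemma X_subset_V: "X \<subseteq> V"
  using component_subset[OF component_X] .

lemma monochromatic_inside_or_outside_X:
  assumes "e \<in> E" "\<not> bic e"
  shows "ends e \<subseteq> X \<or> X \<inter> ends e = {}"
proof (rule ccontr)
  assume split: "\<not> (ends e \<subseteq> X \<or> X \<inter> ends e = {})"
  then obtain u where u: "u \<in> X" "u \<in> ends e" by blast
  obtain v where v: "ends e = {u, v}" using ends_other[OF assms(1) u(2)] by blast
  have "e \<in> mono_edges E ends c" unfolding mono_edges_def using assms by blast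
  then have "v \<in> X"
    using component_closed[OF component_X u(1) _ v] ends_subset[OF assms(1)] v by blast
  then show False using split u v by auto
qed

lemma even_card_X_Int_monochromatic: "e \<in> E \<Longrightarrow> \<not> bic e \<Longrightarrow> even (card (X \<inter> ends e))"
  using monochromatic_inside_or_outside_X even_card_Int_ends_iff by blast

lemma even_card_X_plus_bichromatic_in_PM:
  assumes "PM M" "b \<in> M" "bic b"
  shows "even (card X + card (X \<inter> ends b))"
proof -
  have M: "M \<subseteq> E" "perfect_matching_on V ends M" and fin: "finite M"
    using assms(1) PM_iff finite_PM by auto
  have "card X = (\<Sum>e\<in>M. card (X \<inter> ends e))"
    using card_Int_perfect_matching_on[OF M(2) fin] finite_ends M(1) X_subset_V
    by (metis Int_absorb2 subsetD)
  also have "\<dots> = card (X \<inter> ends b) + (\<Sum>e\<in>M - {b}. card (X \<inter> ends e))"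
    using fin assms(2) by (simp add: sum.remove)
  finally have "card X = card (X \<inter> ends b) + (\<Sum>e\<in>M - {b}. card (X \<inter> ends e))" .
  moreover have "even (\<Sum>e\<in>M - {b}. card (X \<inter> ends e))"
  proof (rule dvd_sum)
    fix e assume e: "e \<in> M - {b}"
    then have "\<not> bic e" using bichromatic_PM_unique[OF assms] by blast
    then show "even (card (X \<inter> ends e))" using even_card_X_Int_monochromatic M(1) e by blast
  qed
  ultimately show ?thesis by simp
qed

lemma odd_card_X: "odd (card X)"
proof
  assume even: "even (card X)"
  have no_crossing: "ends e \<subseteq> X \<or> X \<inter> ends e = {}" if e: "e \<in> E" for e
  proof (cases "bic e")
    case True
    obtain M where "PM M" "e \<in> M" using matching_covered[OF e] by blast
    then have "even (card (X \<inter> ends e))"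
      using even_card_X_plus_bichromatic_in_PM True even by simp
    then show ?thesis using even_card_Int_ends_iff e by blast
  qed (use monochromatic_inside_or_outside_X e in blast)
  obtain u where "u \<in> X" using component_nonempty[OF component_X] by blast
  obtain v where "v \<in> V" "v \<notin> X" using X_subset_V X_neq_V by blast
  obtain f where f: "f \<in> E" "u \<in> ends f" "c f u"
    using red_half_edge X_subset_V \<open>u \<in> X\<close> by blast
  obtain g where g: "g \<in> E" "v \<in> ends g" "c g v"
    using red_half_edge \<open>v \<in> V\<close> by blast
  obtain N where N: "PM N" "f \<in> N" using matching_covered[OF f(1)] by blast
  obtain N' where N': "PM N'" "g \<in> N'" using matching_covered[OF g(1)] by blast
  define M where "M = {e\<in>N. X \<inter> ends e \<noteq> {}} \<union> {e\<in>N'. (V - X) \<inter> ends e \<noteq> {}}"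
  have "perfect_matching_on X ends {e\<in>N. X \<inter> ends e \<noteq> {}}"
    using N(1) PM_iff no_crossing X_subset_V by (intro perfect_matching_on_restrict) auto
  moreover have "perfect_matching_on (V - X) ends {e\<in>N'. (V - X) \<inter> ends e \<noteq> {}}"
    using N'(1) PM_iff no_crossing ends_subset by (intro perfect_matching_on_restrict) blast+
  ultimately have "perfect_matching_on (X \<union> (V - X)) ends M"
    unfolding M_def by (intro perfect_matching_on_Un) blast+
  moreover have "M \<subseteq> E" using N(1) N'(1) PM_iff unfolding M_def by blast
  ultimately have "PM M" using PM_iff X_subset_V by (simp add: Un_absorb1)
  moreover have "f \<in> M" "g \<in> M" "f \<noteq> g" "bic f" "bic g"
    using N(2) N'(2) f g \<open>u \<in> X\<close> \<open>v \<in> V\<close> \<open>v \<notin> X\<close> no_crossing red_bichromatic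
    unfolding M_def by blast+
  ultimately show False using bichromatic_PM_unique by blast
qed

lemma card_X_Int_bichromatic:
  assumes "e \<in> E" "bic e"
  shows "card (X \<inter> ends e) = 1"
proof -
  obtain M where "PM M" "e \<in> M" using matching_covered[OF assms(1)] by blast
  then have "odd (card (X \<inter> ends e))"
    using even_card_X_plus_bichromatic_in_PM assms(2) odd_card_X by simp
  moreover have "card (X \<inter> ends e) \<le> 2"
    using card_mono[OF finite_ends[OF assms(1)], of "X \<inter> ends e"] card_ends[OF assms(1)] by simp
  ultimately show ?thesis by presburger
qed

lemma even_card_X_Int_ends_plus_bichromatic:
  "e \<in> E \<Longrightarrow> even (card (X \<inter> ends e) + of_bool (bic e))"
  using card_X_Int_bichromatic even_card_X_Int_monochromatic by (cases "bic e") auto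

lemma even_card_X_Int_plus_bichromatic:
  assumes "P \<subseteq> E" "perfect_matching_on U ends P"
  shows "even (card (X \<inter> U) + card {e\<in>P. bic e})"
proof -
  have fin: "finite P" using assms(1) finite_E finite_subset by blast
  have "card (X \<inter> U) + card {e\<in>P. bic e}
      = (\<Sum>e\<in>P. card (X \<inter> ends e)) + (\<Sum>e\<in>P. of_bool (bic e))"
    using card_Int_perfect_matching_on[OF assms(2) fin] finite_ends assms(1) fin
    by (auto simp: sum.If_cases Int_def)
  also have "\<dots> = (\<Sum>e\<in>P. card (X \<inter> ends e) + of_bool (bic e))"
    by (simp add: sum.distrib)
  finally show ?thesis
    using even_card_X_Int_ends_plus_bichromatic assms(1) by (auto intro!: dvd_sum)
qed

end

section \<open>Perfect matchings across the two-vertex cut\<close>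

text \<open>The second monochromatic component X' of the theorem enters only through x' \<notin> X.\<close>

locale W_state_two_cut = W_state_mono_component V E ends c X
  for V :: "'v set" and E :: "'e set" and ends c X +
  fixes x x' :: 'v and C :: "'v set"
  assumes x_in_X: "x \<in> X" and x'_notin_X: "x' \<notin> X"
    and two_vertex_cut: "two_vertex_cut V E ends x x'"
    and component_C: "component (V - {x, x'}) (del_verts_E E ends {x, x'}) ends C"
begin

lemma x_in_V: "x \<in> V" and x'_in_V: "x' \<in> V" and x_neq_x': "x \<noteq> x'"
  using two_vertex_cut unfolding two_vertex_cut_def by auto

lemma C_subset: "C \<subseteq> V - {x, x'}"
  using component_subset[OF component_C] .

lemma finite_C: "finite C"
  using C_subset finite_V finite_subset by blast

lemma exists_vertex_outside: "\<exists>v\<in>V. v \<notin> C \<union> {x, x'}"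
proof -
  obtain u w where "u \<in> V - {x, x'}" "w \<in> V - {x, x'}"
    and "\<not> reach (V - {x, x'}) (del_verts_E E ends {x, x'}) ends u w"
    using two_vertex_cut unfolding two_vertex_cut_def by blast
  then have "u \<notin> C \<or> w \<notin> C" using component_reach[OF component_C] by blast
  then show ?thesis using \<open>u \<in> V - {x, x'}\<close> \<open>w \<in> V - {x, x'}\<close> by blast
qed

lemma ends_subset_if_meets_C:
  assumes "e \<in> E" "C \<inter> ends e \<noteq> {}"
  shows "ends e \<subseteq> C \<union> {x, x'}"
proof
  obtain u where u: "u \<in> C" "u \<in> ends e" using assms(2) by blast
  obtain v where v: "ends e = {u, v}" using ends_other[OF assms(1) u(2)] by blast
  fix w assume "w \<in> ends e"
  show "w \<in> C \<union> {x, x'}"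
  proof (cases "w = u \<or> w \<in> {x, x'}")
    case False
    then have w: "w = v" "w \<in> V - {x, x'}"
      using \<open>w \<in> ends e\<close> v ends_subset[OF assms(1)] by auto
    have "e \<in> del_verts_E E ends {x, x'}"
      unfolding del_verts_E_def using assms(1) v w C_subset u(1) by auto
    then show ?thesis using component_closed[OF component_C u(1) _ v] w by simp
  qed (use u in auto)
qed

lemma ends_eq_x_x'_if_disjoint_C:
  assumes "e \<in> E" "ends e \<subseteq> C \<union> {x, x'}" "C \<inter> ends e = {}"
  shows "ends e = {x, x'}"
proof -
  have "ends e \<subseteq> {x, x'}" using assms(2,3) by blast
  then show ?thesis
    using card_subset_eq[of "{x, x'}" "ends e"] card_ends[OF assms(1)] x_neq_x' by simp
qed

lemma bichromatic_x_x': "e \<in> E \<Longrightarrow> ends e = {x, x'} \<Longrightarrow> bic e"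
  using even_card_X_Int_ends_plus_bichromatic[of e] x_in_X x'_notin_X by auto

definition C_edges :: "'e set \<Rightarrow> 'e set" where
  "C_edges M = {e\<in>M. C \<inter> ends e \<noteq> {}}"

definition C_span :: "'e set \<Rightarrow> 'v set" where
  "C_span M = \<Union>(ends ` C_edges M)"

lemma C_edges_subset: "C_edges M \<subseteq> M"
  unfolding C_edges_def by blast

lemma C_edges_subset_E: "PM M \<Longrightarrow> C_edges M \<subseteq> E"
  using C_edges_subset PM_subset_E by blast

lemma perfect_matching_on_C_span: "PM M \<Longrightarrow> perfect_matching_on (C_span M) ends (C_edges M)"
  unfolding C_span_def
  by (rule perfect_matching_on_subset[OF PM_perfect_matching_on C_edges_subset])

lemma C_subset_C_span:
  assumes "PM M"
  shows "C \<subseteq> C_span M"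
proof
  fix v assume "v \<in> C"
  then have "v \<in> V" using C_subset by blast
  then obtain e where "e \<in> M" "v \<in> ends e"
    using perfect_matching_on_covers[OF PM_perfect_matching_on[OF assms]] by blast
  then show "v \<in> C_span M" using \<open>v \<in> C\<close> unfolding C_span_def C_edges_def by blast
qed

lemma C_span_subset:
  assumes "PM M"
  shows "C_span M \<subseteq> C \<union> {x, x'}"
proof
  fix v assume "v \<in> C_span M"
  then obtain e where "e \<in> M" "C \<inter> ends e \<noteq> {}" "v \<in> ends e"
    unfolding C_span_def C_edges_def by blast
  moreover have "e \<in> E" using PM_subset_E[OF assms] \<open>e \<in> M\<close> by blast
  ultimately show "v \<in> C \<union> {x, x'}" using ends_subset_if_meets_C by blast
qed

lemma mem_C_span_iff:
  assumes "PM M" "f \<in> M" "v \<in> ends f"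
  shows "v \<in> C_span M \<longleftrightarrow> f \<in> C_edges M"
proof
  assume "v \<in> C_span M"
  then obtain e where "e \<in> C_edges M" "v \<in> ends e" unfolding C_span_def by blast
  moreover note PM_perfect_matching_on[OF assms(1)]
  ultimately have "e = f"
    using perfect_matching_on_unique[of V ends M e f v] assms(2,3) C_edges_subset by blast
  then show "f \<in> C_edges M" using \<open>e \<in> C_edges M\<close> by simp
qed (use assms(3) in \<open>auto simp: C_span_def\<close>)

lemma card_C_span:
  assumes "PM M"
  shows "card (C_span M) = card C + of_bool (x \<in> C_span M) + of_bool (x' \<in> C_span M)"
proof -
  have "C_span M = C \<union> ({x, x'} \<inter> C_span M)"
    using C_subset_C_span[OF assms] C_span_subset[OF assms] by blast
  moreover have "card (C \<union> ({x, x'} \<inter> C_span M)) = card C + card ({x, x'} \<inter> C_span M)"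
    using finite_C C_subset by (intro card_Un_disjoint) auto
  ultimately have "card (C_span M) = card C + card ({x, x'} \<inter> C_span M)" by simp
  then show ?thesis using x_neq_x'
    by (cases "x \<in> C_span M"; cases "x' \<in> C_span M") auto
qed

lemma even_card_C_span:
  assumes "PM M"
  shows "even (card (C_span M))"
proof -
  have "card (UNIV \<inter> C_span M) = (\<Sum>e\<in>C_edges M. card (UNIV \<inter> ends e))"
    using perfect_matching_on_C_span[OF assms] C_edges_subset_E[OF assms] finite_E finite_ends
    by (intro card_Int_perfect_matching_on) (auto intro: finite_subset)
  also have "\<dots> = (\<Sum>e\<in>C_edges M. 2)"
    using C_edges_subset_E[OF assms] card_ends by (intro sum.cong) auto
  finally show ?thesis by simp
qed

lemma card_X_Int_C_span:
  assumes "PM M"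
  shows "card (X \<inter> C_span M) = card (X \<inter> C) + of_bool (x \<in> C_span M)"
proof -
  have "X \<inter> C_span M = (if x \<in> C_span M then insert x (X \<inter> C) else X \<inter> C)"
    using C_subset_C_span[OF assms] C_span_subset[OF assms] x_in_X x'_notin_X by auto
  moreover have "x \<notin> X \<inter> C" using C_subset by blast
  ultimately show ?thesis using finite_C by simp
qed

lemma C_span_parity:
  assumes "PM M" "f \<in> M" "bic f" "y \<in> ends f"
  shows "even (card (X \<inter> C) + of_bool (x \<in> C_span M) + of_bool (y \<in> C_span M))"
proof -
  have "{e\<in>C_edges M. bic e} = {f} \<inter> C_edges M"
    using bichromatic_PM_unique[OF assms(1-3)] C_edges_subset by blast
  then have "card {e\<in>C_edges M. bic e} = of_bool (y \<in> C_span M)"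
    using mem_C_span_iff[OF assms(1,2,4)] by auto
  moreover have "even (card (X \<inter> C_span M) + card {e\<in>C_edges M. bic e})"
    using even_card_X_Int_plus_bichromatic[OF C_edges_subset_E perfect_matching_on_C_span]
      assms(1) by blast
  ultimately show ?thesis using card_X_Int_C_span[OF assms(1)] by (simp add: add.assoc)
qed

lemma even_card_X_Int_C: "even (card (X \<inter> C))"
proof -
  obtain f where f: "f \<in> E" "x \<in> ends f" "c f x" using red_half_edge x_in_V by blast
  obtain M where "PM M" "f \<in> M" using matching_covered[OF f(1)] by blast
  then show ?thesis using C_span_parity red_bichromatic f by fastforce
qed

lemma even_card_C: "even (card C)"
proof -
  obtain g where g: "g \<in> E" "x' \<in> ends g" "c g x'" using red_half_edge x'_in_V by blast
  obtain M where M: "PM M" "g \<in> M" using matching_covered[OF g(1)] by blast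
  then have "x \<in> C_span M \<longleftrightarrow> x' \<in> C_span M"
    using C_span_parity[OF M _ g(2)] red_bichromatic g even_card_X_Int_C by fastforce
  then show ?thesis using card_C_span[OF M(1)] even_card_C_span[OF M(1)] by auto
qed

lemma x_in_C_span_iff: "PM M \<Longrightarrow> x \<in> C_span M \<longleftrightarrow> x' \<in> C_span M"
  using card_C_span even_card_C_span even_card_C by fastforce

lemma C_span_eq_C_x_x': "PM M \<Longrightarrow> x \<in> C_span M \<Longrightarrow> C_span M = C \<union> {x, x'}"
  using x_in_C_span_iff C_subset_C_span C_span_subset by blast

lemma C_span_eq_C: "PM M \<Longrightarrow> x \<notin> C_span M \<Longrightarrow> C_span M = C"
  using x_in_C_span_iff C_subset_C_span C_span_subset by blast

lemma card_bichromatic_matching_C_span_le_1: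
  assumes "PM M" "Q \<subseteq> E" "perfect_matching_on (C_span M) ends Q"
  shows "card {e\<in>Q. bic e} \<le> 1"
  using card_bichromatic_exchange_le_1[OF assms(1) C_edges_subset assms(2)] assms(3)
  unfolding C_span_def .

lemma card_bichromatic_matching_C_x_x':
  assumes "PM M" "x \<in> C_span M" "Q \<subseteq> E" "perfect_matching_on (C \<union> {x, x'}) ends Q"
  shows "card {e\<in>Q. bic e} = 1"
proof -
  have span: "C_span M = C \<union> {x, x'}" using C_span_eq_C_x_x'[OF assms(1,2)] .
  then have "card {e\<in>Q. bic e} \<le> 1"
    using card_bichromatic_matching_C_span_le_1[OF assms(1,3)] assms(4) by simp
  moreover have "odd (card {e\<in>Q. bic e})"
    using even_card_X_Int_plus_bichromatic[OF assms(3,4)] card_X_Int_C_span[OF assms(1)]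
      span assms(2) even_card_X_Int_C by simp
  ultimately show ?thesis by (auto simp: le_Suc_eq)
qed

lemma exists_PM_C_span_eq_C: "\<exists>M. PM M \<and> C_span M = C"
proof -
  obtain v where v: "v \<in> V" "v \<notin> C \<union> {x, x'}" using exists_vertex_outside by blast
  obtain h where h: "h \<in> E" "v \<in> ends h" "c h v" using red_half_edge[OF v(1)] by blast
  obtain M where M: "PM M" "h \<in> M" using matching_covered[OF h(1)] by blast
  have "v \<notin> C_span M" using C_span_subset[OF M(1)] v(2) by blast
  then have "x \<notin> C_span M"
    using C_span_parity[OF M red_bichromatic[OF h] h(2)] even_card_X_Int_C by auto
  then show ?thesis using C_span_eq_C M(1) by blast
qed

lemma no_bichromatic_matching_C:
  assumes "Q \<subseteq> E" "perfect_matching_on C ends Q" "e \<in> Q"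
  shows "\<not> bic e"
proof -
  obtain M where M: "PM M" "C_span M = C" using exists_PM_C_span_eq_C by blast
  have "card {e\<in>Q. bic e} \<le> 1"
    using card_bichromatic_matching_C_span_le_1[OF M(1) assms(1)] assms(2) M(2) by simp
  moreover have "even (card {e\<in>Q. bic e})"
    using even_card_X_Int_plus_bichromatic[OF assms(1,2)] even_card_X_Int_C
    by (simp add: Int_absorb2 C_subset)
  ultimately have "card {e\<in>Q. bic e} = 0" by (auto simp: le_Suc_eq)
  moreover have "finite {e\<in>Q. bic e}" using assms(1) finite_E by (auto intro: finite_subset)
  ultimately show ?thesis using assms(3) by auto
qed

end

section \<open>W-blocks\<close>

lemma wblock_ends_simps [simp]:
  "wblock_ends ends x x' (Inl e) = ends e"
  "wblock_ends ends x x' (Inr n) = {x, x'}"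
  unfolding wblock_ends_def by simp_all

lemma wblock_ends_comp_Inl: "wblock_ends ends x x' \<circ> Inl = ends"
  by auto

lemma wblock_col_Inl [simp]: "wblock_col c x x' r (Inl e) = c e"
  unfolding wblock_col_def by auto

lemma bichromatic_wblock_Inl [simp]:
  "bichromatic (wblock_ends ends x x') (wblock_col c x x' r) (Inl e) = bichromatic ends c e"
  unfolding bichromatic_def by simp

lemma bichromatic_wblock_Inr:
  "x \<noteq> x' \<Longrightarrow> bichromatic (wblock_ends ends x x') (wblock_col c x x' r) (Inr n)"
  unfolding bichromatic_def wblock_col_def by auto

lemma Inl_in_wblock_E_iff:
  "Inl e \<in> wblock_E E ends c C x x' r \<longleftrightarrow> e \<in> E \<and> ends e \<subseteq> C \<union> {x, x'}"
  unfolding wblock_E_def wblock_E1_def wblock_E0_def wblock_V_def Let_def by auto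

lemma finite_wblock_E: "finite E \<Longrightarrow> finite (wblock_E E ends c C x x' r)"
proof -
  assume "finite E"
  moreover have "wblock_E E ends c C x x' r \<subseteq> Inl ` E \<union> Inr ` {0, 1, 2}"
    unfolding wblock_E_def wblock_E1_def wblock_E0_def Let_def by auto
  ultimately show ?thesis by (simp add: finite_subset)
qed

lemma wblock_E1_subset: "wblock_E1 E ends c C x x' \<subseteq> wblock_E E ends c C x x' r"
  unfolding wblock_E_def Let_def by (rule Un_upper1)

lemma wblock_E0_subset: "wblock_E0 E ends C x x' \<subseteq> wblock_E E ends c C x x' r"
proof -
  have "wblock_E0 E ends C x x' \<subseteq> wblock_E1 E ends c C x x'"
    unfolding wblock_E1_def Let_def by (rule subset_trans[OF Un_upper1 Un_upper1])
  then show ?thesis using wblock_E1_subset by (rule subset_trans)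
qed

lemma wblock_E_has_x_x'_edge:
  "\<exists>k\<in>wblock_E E ends c C x x' r. wblock_ends ends x x' k = {x, x'}"
proof (cases "\<exists>k\<in>wblock_E1 E ends c C x x'. wblock_ends ends x x' k = {x, x'}")
  case True
  then show ?thesis using wblock_E1_subset[of E ends c C x x' r] by blast
next
  case False
  then have "Inr 2 \<in> wblock_E E ends c C x x' r" unfolding wblock_E_def Let_def by auto
  then show ?thesis by (intro bexI[of _ "Inr 2"]) simp_all
qed

lemma wblock_has_red_at_cut_vertex:
  assumes "y \<in> {x, x'}"
  shows "\<exists>k\<in>wblock_E E ends c C x x' r. y \<in> wblock_ends ends x x' k \<and> wblock_col c x x' r k y"
proof (cases "\<exists>e. Inl e \<in> wblock_E0 E ends C x x' \<and> y \<in> ends e \<and> c e y")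
  case True
  then obtain e where "Inl e \<in> wblock_E E ends c C x x' r" "y \<in> ends e" "c e y"
    using wblock_E0_subset[of E ends C x x' c r] by blast
  then show ?thesis by (intro bexI[of _ "Inl e"]) simp_all
next
  case False
  define n :: nat where "n = (if y = x then 0 else 1)"
  have "\<not> (\<exists>f\<in>wblock_E0 E ends C x x'. y \<in> wblock_ends ends x x' f \<and> wblock_col c x x' True f y)"
    using False unfolding wblock_E0_def by auto
  then have "Inr n \<in> wblock_E1 E ends c C x x'"
    using assms unfolding wblock_E1_def Let_def n_def by auto
  moreover have "wblock_col c x x' r (Inr n) y"
    using assms unfolding wblock_col_def n_def by auto
  ultimately show ?thesis using wblock_E1_subset[of E ends c C x x' r] assms
    by (intro bexI[of _ "Inr n"]) (auto simp: n_def)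
qed

lemma perfect_matching_on_wblock_Inl:
  "perfect_matching_on W (wblock_ends ends x x') (Inl ` Q) \<longleftrightarrow> perfect_matching_on W ends Q"
  unfolding perfect_matching_on_image[OF inj_Inl] wblock_ends_comp_Inl ..

lemma card_bichromatic_wblock_Inl:
  "card {k\<in>Inl ` Q. bichromatic (wblock_ends ends x x') (wblock_col c x x' r) k}
     = card {e\<in>Q. bichromatic ends c e}"
proof -
  have "{k\<in>Inl ` Q. bichromatic (wblock_ends ends x x') (wblock_col c x x' r) k}
      = Inl ` {e\<in>Q. bichromatic ends c e}" by auto
  then show ?thesis by (simp add: card_image)
qed

context W_state_two_cut
begin

abbreviation VB :: "'v set" where "VB \<equiv> wblock_V C x x'"
abbreviation EB :: "bool \<Rightarrow> ('e + nat) set" where "EB r \<equiv> wblock_E E ends c C x x' r"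
abbreviation endsB :: "'e + nat \<Rightarrow> 'v set" where "endsB \<equiv> wblock_ends ends x x'"
abbreviation colB :: "bool \<Rightarrow> 'e + nat \<Rightarrow> 'v \<Rightarrow> bool" where "colB r \<equiv> wblock_col c x x' r"
abbreviation bicB :: "bool \<Rightarrow> 'e + nat \<Rightarrow> bool" where "bicB r \<equiv> bichromatic endsB (colB r)"
abbreviation PMB :: "bool \<Rightarrow> ('e + nat) set \<Rightarrow> bool" where "PMB r \<equiv> perfect_matching VB (EB r) endsB"

lemma VB_eq: "VB = C \<union> {x, x'}"
  unfolding wblock_V_def ..

lemma Inl_in_EB_iff: "Inl e \<in> EB r \<longleftrightarrow> e \<in> E \<and> ends e \<subseteq> C \<union> {x, x'}"
  by (rule Inl_in_wblock_E_iff)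

lemma multigraph_wblock: "multigraph VB (EB r) endsB"
proof -
  have "endsB k \<subseteq> VB \<and> card (endsB k) = 2" if k: "k \<in> EB r" for k
  proof (cases k)
    case (Inl e)
    then have "e \<in> E" "ends e \<subseteq> C \<union> {x, x'}" using k Inl_in_EB_iff by simp_all
    then show ?thesis using Inl card_ends VB_eq by simp
  qed (use x_neq_x' VB_eq in auto)
  then show ?thesis
    unfolding multigraph_def using finite_C VB_eq finite_wblock_E[OF finite_E] by auto
qed

lemma PMB_iff: "PMB r K \<longleftrightarrow> K \<subseteq> EB r \<and> perfect_matching_on VB endsB K"
  using perfect_matching_iff_on[OF multigraph_wblock] .

lemma Inl_C_edges_subset_wblock_E:
  assumes "PM M"
  shows "Inl ` C_edges M \<subseteq> EB r"
proof
  fix k :: "'e + nat" assume "k \<in> Inl ` C_edges M"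
  then obtain e where e: "k = Inl e" "e \<in> C_edges M" by blast
  have "ends e \<subseteq> C \<union> {x, x'}"
    using perfect_matching_on_ends_subset[OF perfect_matching_on_C_span[OF assms] e(2)]
      C_span_subset[OF assms] by blast
  then show "k \<in> EB r" using e C_edges_subset_E[OF assms] Inl_in_EB_iff by auto
qed

lemma PMB_of_C_span_eq_C:
  assumes "PM M" "C_span M = C" "k \<in> EB r" "endsB k = {x, x'}"
  shows "PMB r (Inl ` C_edges M \<union> {k})"
proof -
  have "perfect_matching_on C endsB (Inl ` C_edges M)"
    unfolding perfect_matching_on_wblock_Inl using perfect_matching_on_C_span[OF assms(1)] assms(2)
    by simp
  moreover have "perfect_matching_on {x, x'} endsB {k}"
    using perfect_matching_on_singleton[of endsB k] assms(4) by simp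
  ultimately have "perfect_matching_on (C \<union> {x, x'}) endsB (Inl ` C_edges M \<union> {k})"
    using C_subset by (intro perfect_matching_on_Un) auto
  then show ?thesis
    using PMB_iff VB_eq Inl_C_edges_subset_wblock_E[OF assms(1)] assms(3) by simp
qed

lemma PMB_of_C_span_eq_C_x_x':
  assumes "PM M" "C_span M = C \<union> {x, x'}"
  shows "PMB r (Inl ` C_edges M)"
proof -
  have "perfect_matching_on (C \<union> {x, x'}) endsB (Inl ` C_edges M)"
    unfolding perfect_matching_on_wblock_Inl using perfect_matching_on_C_span[OF assms(1)] assms(2)
    by simp
  then show ?thesis using PMB_iff VB_eq Inl_C_edges_subset_wblock_E[OF assms(1)] by simp
qed

lemma wblock_matching_covered:
  assumes k: "k \<in> EB r"
  shows "\<exists>K. PMB r K \<and> k \<in> K"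
proof (cases "endsB k = {x, x'}")
  case True
  obtain M where "PM M" "C_span M = C" using exists_PM_C_span_eq_C by blast
  then show ?thesis using PMB_of_C_span_eq_C[OF _ _ k True] by blast
next
  case False
  then obtain e where e: "k = Inl e" "e \<in> E" "ends e \<subseteq> C \<union> {x, x'}"
    using k Inl_in_EB_iff by (cases k) auto
  then have "C \<inter> ends e \<noteq> {}" using False ends_eq_x_x'_if_disjoint_C by auto
  obtain M where M: "PM M" "e \<in> M" using matching_covered[OF e(2)] by blast
  then have eC: "e \<in> C_edges M" using \<open>C \<inter> ends e \<noteq> {}\<close> unfolding C_edges_def by blast
  show ?thesis
  proof (cases "x \<in> C_span M")
    case True
    then show ?thesis
      using PMB_of_C_span_eq_C_x_x'[OF M(1) C_span_eq_C_x_x'[OF M(1) True]] eC e(1) by blast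
  next
    case False
    obtain k' where "k' \<in> EB r" "endsB k' = {x, x'}"
      using wblock_E_has_x_x'_edge[of E ends c C x x' r] by blast
    then show ?thesis
      using PMB_of_C_span_eq_C[OF M(1) C_span_eq_C[OF M(1) False]] eC e(1) by blast
  qed
qed

lemma bicB_Inr: "bicB r (Inr n)"
  using bichromatic_wblock_Inr[OF x_neq_x'] .

lemma wblock_monochromatic_blue:
  assumes "k \<in> EB r" "\<not> bicB r k" "w \<in> endsB k"
  shows "\<not> colB r k w"
proof (cases k)
  case (Inl e)
  then show ?thesis using assms monochromatic_blue Inl_in_EB_iff by simp
qed (use assms(2) bicB_Inr in simp)

lemma wblock_red:
  assumes "v \<in> VB"
  shows "\<exists>k\<in>EB r. v \<in> endsB k \<and> colB r k v"
proof (cases "v \<in> C")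
  case True
  then obtain e where e: "e \<in> E" "v \<in> ends e" "c e v"
    using red_half_edge C_subset by blast
  then have "Inl e \<in> EB r" using ends_subset_if_meets_C True Inl_in_EB_iff by blast
  then show ?thesis using e by (intro bexI[of _ "Inl e"]) simp_all
next
  case False
  then have "v \<in> {x, x'}" using assms VB_eq by blast
  then show ?thesis by (rule wblock_has_red_at_cut_vertex)
qed

lemma wblock_Inl_vimage:
  assumes "K \<subseteq> EB r" "\<And>k. k \<in> K \<Longrightarrow> endsB k \<noteq> {x, x'}"
  shows "K = Inl ` (Inl -` K)" and "Inl -` K \<subseteq> E"
proof -
  have "K \<subseteq> range Inl"
  proof
    fix k assume "k \<in> K"
    then have "endsB k \<noteq> {x, x'}" by (rule assms(2))
    then show "k \<in> range Inl" by (cases k) auto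
  qed
  then show "K = Inl ` (Inl -` K)" by (simp add: image_vimage_eq Int_absorb2)
  show "Inl -` K \<subseteq> E" using assms(1) Inl_in_EB_iff by auto
qed

lemma wblock_PM_with_x_x'_edge:
  assumes "PMB r K" "k0 \<in> K" "endsB k0 = {x, x'}"
  shows "{k\<in>K. bicB r k} = {k0}"
proof -
  define Q where "Q = Inl -` (K - {k0})"
  have K: "K \<subseteq> EB r" "perfect_matching_on VB endsB K" using assms(1) PMB_iff by auto
  have "VB - \<Union>(endsB ` {k0}) = C" using assms(3) VB_eq C_subset by auto
  then have rest: "perfect_matching_on C endsB (K - {k0})"
    using perfect_matching_on_Diff[OF K(2), of "{k0}"] assms(2) by simp
  have "endsB k \<noteq> {x, x'}" if k: "k \<in> K - {k0}" for k
    using perfect_matching_on_unique[OF K(2) _ assms(2), of k x] k assms(3) by auto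
  moreover have "K - {k0} \<subseteq> EB r" using K(1) by blast
  ultimately have KQ: "K - {k0} = Inl ` Q" and QE: "Q \<subseteq> E"
    using wblock_Inl_vimage[of "K - {k0}" r] unfolding Q_def by blast+
  have pQ: "perfect_matching_on C ends Q"
    using rest unfolding KQ perfect_matching_on_wblock_Inl .
  have "\<not> bicB r k" if k: "k \<in> K - {k0}" for k
  proof -
    obtain e where "k = Inl e" "e \<in> Q" using k unfolding KQ by blast
    then show ?thesis using no_bichromatic_matching_C[OF QE pQ] by simp
  qed
  moreover have "bicB r k0"
  proof (cases k0)
    case (Inl e)
    then have "Inl e \<in> EB r" using K(1) assms(2) by blast
    then have "e \<in> E" using Inl_in_EB_iff by simp
    then show ?thesis using Inl assms(3) bichromatic_x_x' by simp
  qed (simp add: bicB_Inr)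
  ultimately show ?thesis using assms(2) by auto
qed

lemma wblock_PM_without_x_x'_edge:
  assumes "PMB r K" "\<And>k. k \<in> K \<Longrightarrow> endsB k \<noteq> {x, x'}"
  shows "card {k\<in>K. bicB r k} = 1"
proof -
  define Q where "Q = Inl -` K"
  have K: "K \<subseteq> EB r" "perfect_matching_on VB endsB K" using assms(1) PMB_iff by auto
  then have KQ: "K = Inl ` Q" and QE: "Q \<subseteq> E"
    using wblock_Inl_vimage[of K r] assms(2) unfolding Q_def by blast+
  have pQ: "perfect_matching_on (C \<union> {x, x'}) ends Q"
    using K(2) unfolding KQ VB_eq perfect_matching_on_wblock_Inl .
  obtain e0 where e0: "e0 \<in> Q" "x \<in> ends e0"
    using perfect_matching_on_covers[OF pQ] by blast
  have "Inl e0 \<in> K" using e0(1) unfolding KQ by blast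
  then have "ends e0 \<noteq> {x, x'}" using assms(2) by fastforce
  have "e0 \<in> E" using QE e0(1) by blast
  then have "C \<inter> ends e0 \<noteq> {}"
    using ends_eq_x_x'_if_disjoint_C[OF _ perfect_matching_on_ends_subset[OF pQ e0(1)]]
      \<open>ends e0 \<noteq> {x, x'}\<close> by blast
  obtain M where M: "PM M" "e0 \<in> M" using matching_covered[OF \<open>e0 \<in> E\<close>] by blast
  then have "x \<in> C_span M"
    using mem_C_span_iff[OF M e0(2)] \<open>C \<inter> ends e0 \<noteq> {}\<close> unfolding C_edges_def by blast
  then have "card {e\<in>Q. bic e} = 1" using card_bichromatic_matching_C_x_x'[OF M(1) _ QE pQ] by blast
  then show ?thesis unfolding KQ card_bichromatic_wblock_Inl .
qed

lemma card_bichromatic_wblock_PM: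
  assumes "PMB r K"
  shows "card {k\<in>K. bicB r k} = 1"
proof (cases "\<exists>k0\<in>K. endsB k0 = {x, x'}")
  case True
  then obtain k0 where "k0 \<in> K" "endsB k0 = {x, x'}" by blast
  then show ?thesis using wblock_PM_with_x_x'_edge[OF assms] by simp
qed (use wblock_PM_without_x_x'_edge[OF assms] in blast)

theorem wblock_W_state: "W_state VB (EB r) endsB (colB r)"
proof -
  have "\<forall>k\<in>EB r. \<exists>K. PMB r K \<and> k \<in> K"
    and "\<forall>k\<in>EB r. \<not> bicB r k \<longrightarrow> (\<forall>w\<in>endsB k. \<not> colB r k w)"
    and "\<forall>K. PMB r K \<longrightarrow> card {k\<in>K. bicB r k} = 1"
    and "\<forall>v\<in>VB. \<exists>k\<in>EB r. v \<in> endsB k \<and> colB r k v"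
    using wblock_matching_covered wblock_monochromatic_blue card_bichromatic_wblock_PM wblock_red
    by blast+
  then show ?thesis
    unfolding W_state_def matching_covered_def using multigraph_wblock by blast
qed

end

theorem mainTheorem14:
  fixes V :: "'v set" and E :: "'e set" and ends :: "'e \<Rightarrow> 'v set"
    and c :: "'e \<Rightarrow> 'v \<Rightarrow> bool" and X X' C :: "'v set" and x x' :: 'v and r :: bool
  assumes "W_state V E ends c"
    and "component V (mono_edges E ends c) ends X"
    and "component V (mono_edges E ends c) ends X'"
    and "X \<noteq> X'"
    and "two_vertex_cut V E ends x x'"
    and "x \<in> X" and "x' \<in> X'"
    and "component (V - {x, x'}) (del_verts_E E ends {x, x'}) ends C"
  shows "W_state (wblock_V C x x') (wblock_E E ends c C x x' r)
           (wblock_ends ends x x') (wblock_col c x x' r)"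
proof -
  have "x' \<notin> X" using components_disjoint[OF assms(2-4)] assms(7) by blast
  moreover have "x' \<in> V" using assms(5) unfolding two_vertex_cut_def by blast
  ultimately interpret W_state_two_cut V E ends c X x x' C
    using assms by unfold_locales auto
  show ?thesis by (rule wblock_W_state)
qed

end
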